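(* Let $G$ be a group and $k\in\mathbb{N}$, and suppose $[\overline{G}_k:\overline{G}_{k+1}]<\infty$. Then $\bigcap_{i=1}^\infty\overline{G}_i=\overline{G}_k$.
   Context: The lower central series is $G_1=G$, $G_{i+1}=[G,G_i]$, where $[x,y]=x^{-1}y^{-1}xy$ and $[A,B]=\langle[a,b]:a\in A,b\in B\rangle$. The generalised commutator subgroups are $\overline{G}_k=\{g\in G:\exists n\in\mathbb{N},\ g^n\in G_k\}$ (these are subgroups, decreasing in $k$). *)

theory Defs
  imports "HOL-Algebra.Algebra"
begin

definition grp_comm :: "('a, 'b) monoid_scheme \<Rightarrow> 'a \<Rightarrow> 'a \<Rightarrow> 'a" where
  "grp_comm G x y = inv\<^bsub>G\<^esub> x \<otimes>\<^bsub>G\<^esub> inv\<^bsub>G\<^esub> y \<otimes>\<^bsub>G\<^esub> x \<otimes>\<^bsub>G\<^esub> y"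

definition comm_subgroup :: "('a, 'b) monoid_scheme \<Rightarrow> 'a set \<Rightarrow> 'a set \<Rightarrow> 'a set" where
  "comm_subgroup G A B = generate G {grp_comm G a b | a b. a \<in> A \<and> b \<in> B}"

primrec lcs0 :: "('a, 'b) monoid_scheme \<Rightarrow> nat \<Rightarrow> 'a set" where
  "lcs0 G 0 = carrier G"
| "lcs0 G (Suc n) = comm_subgroup G (carrier G) (lcs0 G n)"

text \<open>Lower central series, 1-indexed: lower_central G 1 = G, G_(i+1) = [G, G_i].\<close>
definition lower_central :: "('a, 'b) monoid_scheme \<Rightarrow> nat \<Rightarrow> 'a set" where
  "lower_central G i = lcs0 G (i - 1)"

definition gen_comm :: "('a, 'b) monoid_scheme \<Rightarrow> nat \<Rightarrow> 'a set" where
  "gen_comm G k = {g \<in> carrier G. \<exists>n::nat. n > 0 \<and> g [^]\<^bsub>G\<^esub> n \<in> lower_central G k}"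

end

(* Applied to the powers of a single element, the finite index hypothesis forces
   gen_comm G k \<subseteq> gen_comm G (k + 1), i.e. G_k/G_(k+1) is a torsion group. Torsion then
   propagates down the series: G_(j+1)/G_(j+2) is central in G/G_(j+2) and generated by
   the classes of the [x, a] with a \<in> G_j, and there [x, a] [^] m = [x, a [^] m], which is
   trivial once a [^] m \<in> G_(j+1). Hence gen_comm G k \<subseteq> gen_comm G j for all j \<ge> k,
   and for j \<le> k this is monotonicity. *)
theory Submission
  imports Defs
begin

definition isolator :: "('a, 'b) monoid_scheme \<Rightarrow> 'a set \<Rightarrow> 'a set" where
  "isolator G N = {g \<in> carrier G. \<exists>n::nat. n > 0 \<and> g [^]\<^bsub>G\<^esub> n \<in> N}"

lemma gen_comm_eq_isolator: "gen_comm G k = isolator G (lower_central G k)"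
  by (simp add: gen_comm_def isolator_def)

lemma isolator_mono: "N \<subseteq> M \<Longrightarrow> isolator G N \<subseteq> isolator G M"
  unfolding isolator_def by blast

lemma grp_comm_mem_comm_subgroup: "a \<in> A \<Longrightarrow> b \<in> B \<Longrightarrow> grp_comm G a b \<in> comm_subgroup G A B"
  unfolding comm_subgroup_def by (blast intro: generate.incl)

context group
begin

lemma mult_inv_cancel_left: "x \<in> carrier G \<Longrightarrow> y \<in> carrier G \<Longrightarrow> x \<otimes> (inv x \<otimes> y) = y"
  by (simp add: m_assoc [symmetric])

lemma inv_mult_cancel_left: "x \<in> carrier G \<Longrightarrow> y \<in> carrier G \<Longrightarrow> inv x \<otimes> (x \<otimes> y) = y"
  by (simp add: m_assoc [symmetric])

lemma grp_comm_closed [simp]: "x \<in> carrier G \<Longrightarrow> y \<in> carrier G \<Longrightarrow> grp_comm G x y \<in> carrier G"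
  by (simp add: grp_comm_def)

lemma grp_comm_conj:
  assumes "g \<in> carrier G" "x \<in> carrier G" "y \<in> carrier G"
  shows "g \<otimes> grp_comm G x y \<otimes> inv g = grp_comm G (g \<otimes> x \<otimes> inv g) (g \<otimes> y \<otimes> inv g)"
  using assms by (simp add: grp_comm_def inv_mult_group m_assoc mult_inv_cancel_left inv_mult_cancel_left)

lemma commute_if_grp_comm_eq_one:
  assumes "x \<in> carrier G" "y \<in> carrier G" "grp_comm G x y = \<one>"
  shows "x \<otimes> y = y \<otimes> x"
proof -
  have "inv (y \<otimes> x) \<otimes> (x \<otimes> y) = \<one>"
    using assms by (simp add: grp_comm_def inv_mult_group m_assoc)
  with assms show ?thesis
    by (metis inv_closed inv_inv inv_equality m_closed)
qed

lemma grp_comm_mult_right: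
  assumes "x \<in> carrier G" "y \<in> carrier G" "z \<in> carrier G"
  shows "grp_comm G x (y \<otimes> z) = grp_comm G x z \<otimes> (inv z \<otimes> grp_comm G x y \<otimes> z)"
  using assms by (simp add: grp_comm_def inv_mult_group m_assoc mult_inv_cancel_left inv_mult_cancel_left)

lemma grp_comm_nat_pow_right:
  assumes "x \<in> carrier G" "y \<in> carrier G" "y \<otimes> grp_comm G x y = grp_comm G x y \<otimes> y"
  shows "grp_comm G x (y [^] (n::nat)) = grp_comm G x y [^] n"
proof (induction n)
  case 0
  show ?case using assms(1) by (simp add: grp_comm_def m_assoc)
next
  case (Suc n)
  have "grp_comm G x y \<otimes> y [^] n = y [^] n \<otimes> grp_comm G x y"
    using group_commutes_pow[OF assms(3)] assms(1,2) by simp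
  then have conj: "inv (y [^] n) \<otimes> grp_comm G x y \<otimes> y [^] n = grp_comm G x y"
    using assms(1,2) by (simp add: m_assoc inv_mult_cancel_left)
  have "grp_comm G x (y [^] Suc n) = grp_comm G x (y \<otimes> y [^] n)"
    by (simp only: nat_pow_Suc2[OF assms(2)])
  also have "\<dots> = grp_comm G x (y [^] n) \<otimes> (inv (y [^] n) \<otimes> grp_comm G x y \<otimes> y [^] n)"
    using assms(1,2) by (simp add: grp_comm_mult_right)
  also have "\<dots> = grp_comm G x y [^] Suc n"
    using Suc conj by simp
  finally show ?case .
qed

lemma subgroup_nat_pow_closed: "subgroup N G \<Longrightarrow> h \<in> N \<Longrightarrow> h [^] (n::nat) \<in> N"
  by (induction n) (auto simp: subgroup.one_closed subgroup.m_closed)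

lemma subset_isolator: "N \<subseteq> carrier G \<Longrightarrow> N \<subseteq> isolator G N"
  unfolding isolator_def by (force intro: exI[of _ 1])

lemma isolator_nat_pow_root:
  assumes "g \<in> carrier G" "n > 0" "g [^] (n::nat) \<in> isolator G N"
  shows "g \<in> isolator G N"
proof -
  obtain m :: nat where "m > 0" "(g [^] n) [^] m \<in> N"
    using assms(3) unfolding isolator_def by blast
  with assms(1,2) show ?thesis
    unfolding isolator_def by (auto simp: nat_pow_pow intro!: exI[of _ "n * m"])
qed

lemma isolator_subset_isolator: "N \<subseteq> isolator G M \<Longrightarrow> isolator G N \<subseteq> isolator G M"
  using isolator_nat_pow_root unfolding isolator_def[of G N] by blast

lemma nat_pow_mem_isolator:
  assumes "subgroup N G" "g \<in> isolator G N"
  shows "g [^] (i::nat) \<in> isolator G N"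
proof -
  obtain n :: nat where n: "n > 0" "g [^] n \<in> N" "g \<in> carrier G"
    using assms(2) unfolding isolator_def by blast
  then have "(g [^] i) [^] n = (g [^] n) [^] i"
    by (simp add: nat_pow_pow mult.commute)
  also have "\<dots> \<in> N"
    using subgroup_nat_pow_closed[OF assms(1) n(2)] .
  finally show ?thesis
    using n unfolding isolator_def by auto
qed

lemma subset_isolator_if_finite_rcosets:
  assumes M: "subgroup M G" and H: "H \<subseteq> carrier G" "\<And>h i. h \<in> H \<Longrightarrow> h [^] (i::nat) \<in> H"
    and fin: "finite (rcosets\<^bsub>G\<lparr>carrier := H\<rparr>\<^esub> (isolator G M))"
  shows "H \<subseteq> isolator G M"
proof
  fix g assume g: "g \<in> H"
  then have g_carrier: "g \<in> carrier G" using H by blast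
  define K where "K = isolator G M"
  define f where "f i = K #> g [^] (i::nat)" for i
  have "range f \<subseteq> rcosets\<^bsub>G\<lparr>carrier := H\<rparr>\<^esub> K"
    using H(2)[OF g] by (auto simp: f_def RCOSETS_def r_coset_def)
  then have "\<not> inj f"
    using fin K_def finite_subset range_inj_infinite by blast
  then obtain i j where ij: "f i = f j" "i < j"
    unfolding inj_def by (metis linorder_neqE_nat)
  have "\<one> \<in> K"
    using subset_isolator[OF subgroup.subset[OF M]] subgroup.one_closed[OF M] K_def by blast
  then have "g [^] j \<in> f i"
    using ij(1) g_carrier by (force simp: f_def r_coset_def)
  then obtain c where c: "c \<in> K" "g [^] j = c \<otimes> g [^] i"
    unfolding f_def r_coset_def by blast
  moreover have "c \<in> carrier G" using c(1) unfolding K_def isolator_def by blast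
  moreover have "g [^] j = g [^] (j - i) \<otimes> g [^] i"
    using ij(2) g_carrier by (simp add: nat_pow_mult)
  ultimately have "g [^] (j - i) \<in> K"
    using g_carrier by simp
  then show "g \<in> isolator G M"
    using isolator_nat_pow_root[OF g_carrier, of "j - i"] ij(2) K_def by simp
qed

end

context normal
begin

lemma rcoset_group_hom: "group_hom G (G Mod H) ((#>) H)"
  by (simp add: group_hom_def group_hom_axioms_def is_group factorgroup_is_group r_coset_hom_Mod)

lemma rcoset_eq_self_iff: "x \<in> carrier G \<Longrightarrow> H #> x = H \<longleftrightarrow> x \<in> H"
  using coset_join1[of H x] coset_join2[of x H] subgroup_axioms by blast

lemma rcoset_grp_comm:
  "x \<in> carrier G \<Longrightarrow> y \<in> carrier G \<Longrightarrow>
    H #> grp_comm G x y = grp_comm (G Mod H) (H #> x) (H #> y)"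
  using group_hom.hom_mult[OF rcoset_group_hom] group_hom.hom_inv[OF rcoset_group_hom]
  by (simp add: grp_comm_def)

lemma rcoset_commute:
  assumes "x \<in> carrier G" "y \<in> carrier G" "grp_comm G x y \<in> H"
  shows "(H #> x) \<otimes>\<^bsub>G Mod H\<^esub> (H #> y) = (H #> y) \<otimes>\<^bsub>G Mod H\<^esub> (H #> x)"
proof -
  interpret Q: group "G Mod H" by (rule factorgroup_is_group)
  interpret p: group_hom G "G Mod H" "(#>) H" by (rule rcoset_group_hom)
  have "grp_comm (G Mod H) (H #> x) (H #> y) = \<one>\<^bsub>G Mod H\<^esub>"
    using assms by (simp add: rcoset_eq_self_iff flip: rcoset_grp_comm)
  with assms(1,2) show ?thesis
    by (intro Q.commute_if_grp_comm_eq_one) auto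
qed

lemma grp_comm_nat_pow_mem:
  assumes x: "x \<in> carrier G" and y: "y \<in> carrier G"
    and "grp_comm G y (grp_comm G x y) \<in> H" "grp_comm G x (y [^] (n::nat)) \<in> H"
  shows "grp_comm G x y [^] n \<in> H"
proof -
  interpret Q: group "G Mod H" by (rule factorgroup_is_group)
  interpret p: group_hom G "G Mod H" "(#>) H" by (rule rcoset_group_hom)
  have "H #> (grp_comm G x y [^] n) = grp_comm (G Mod H) (H #> x) (H #> y) [^]\<^bsub>G Mod H\<^esub> n"
    using x y by (metis grp_comm_closed p.hom_nat_pow rcoset_grp_comm)
  also have "\<dots> = grp_comm (G Mod H) (H #> x) ((H #> y) [^]\<^bsub>G Mod H\<^esub> n)"
    using Q.grp_comm_nat_pow_right rcoset_commute[of y "grp_comm G x y"] assms(3) x y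
    by (simp add: rcoset_grp_comm)
  also have "\<dots> = H #> grp_comm G x (y [^] n)"
    using x y by (simp add: rcoset_grp_comm p.hom_nat_pow)
  also have "\<dots> = H"
    using assms(4) x y by (simp add: rcoset_eq_self_iff)
  finally show ?thesis
    using x y by (simp add: rcoset_eq_self_iff)
qed

lemma isolator_Int_subgroup:
  assumes B: "subgroup B G" and comm: "\<And>b c. b \<in> B \<Longrightarrow> c \<in> B \<Longrightarrow> grp_comm G b c \<in> H"
  shows "subgroup (B \<inter> isolator G H) G"
proof (rule subgroupI)
  show "B \<inter> isolator G H \<subseteq> carrier G"
    using subgroup.subset[OF B] by blast
  show "B \<inter> isolator G H \<noteq> {}"
    using subgroup.one_closed[OF B] subset_isolator[OF subset] subgroup.one_closed[OF subgroup_axioms]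
    by blast
next
  fix b assume "b \<in> B \<inter> isolator G H"
  then obtain m :: nat where "b \<in> B" "m > 0" "b [^] m \<in> H"
    unfolding isolator_def by blast
  then show "inv b \<in> B \<inter> isolator G H"
    using subgroup.m_inv_closed[OF B] subgroup.mem_carrier[OF B]
    by (auto simp: isolator_def nat_pow_inv intro!: exI[of _ m])
next
  interpret Q: group "G Mod H" by (rule factorgroup_is_group)
  interpret p: group_hom G "G Mod H" "(#>) H" by (rule rcoset_group_hom)
  fix b c assume "b \<in> B \<inter> isolator G H" "c \<in> B \<inter> isolator G H"
  then obtain m n :: nat where b: "b \<in> B" "m > 0" "b [^] m \<in> H"
    and c: "c \<in> B" "n > 0" "c [^] n \<in> H"
    unfolding isolator_def by blast
  have bc: "b \<in> carrier G" "c \<in> carrier G"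
    using b c subgroup.mem_carrier[OF B] by auto
  have pb: "(H #> b) [^]\<^bsub>G Mod H\<^esub> m = \<one>\<^bsub>G Mod H\<^esub>"
    using b bc by (metis one_FactGroup p.hom_nat_pow rcoset_eq_self_iff nat_pow_closed)
  have pc: "(H #> c) [^]\<^bsub>G Mod H\<^esub> n = \<one>\<^bsub>G Mod H\<^esub>"
    using c bc by (metis one_FactGroup p.hom_nat_pow rcoset_eq_self_iff nat_pow_closed)
  have "H #> ((b \<otimes> c) [^] (m * n))
      = (H #> b) [^]\<^bsub>G Mod H\<^esub> (m * n) \<otimes>\<^bsub>G Mod H\<^esub> (H #> c) [^]\<^bsub>G Mod H\<^esub> (m * n)"
    using bc rcoset_commute[OF bc comm[OF b(1) c(1)]]
    by (metis Q.pow_mult_distrib m_closed p.hom_closed p.hom_mult p.hom_nat_pow)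
  also have "\<dots> = \<one>\<^bsub>G Mod H\<^esub>"
    using pb pc bc by (metis Q.nat_pow_one Q.nat_pow_pow Q.r_one Q.one_closed mult.commute p.hom_closed)
  finally have "(b \<otimes> c) [^] (m * n) \<in> H"
    using bc by (simp add: rcoset_eq_self_iff)
  then show "b \<otimes> c \<in> B \<inter> isolator G H"
    using b c bc subgroup.m_closed[OF B] by (auto simp: isolator_def intro!: exI[of _ "m * n"])
qed

end

context group
begin

lemma comm_subgroup_normal:
  assumes "N \<lhd> G" shows "comm_subgroup G (carrier G) N \<lhd> G"
  unfolding comm_subgroup_def
proof (rule normal_generateI)
  interpret N: normal N G by (rule assms)
  show "{grp_comm G a b | a b. a \<in> carrier G \<and> b \<in> N} \<subseteq> carrier G"
    using N.subset by auto
  fix h g assume "h \<in> {grp_comm G a b | a b. a \<in> carrier G \<and> b \<in> N}" and g: "g \<in> carrier G"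
  then obtain a b where h: "h = grp_comm G a b" and a: "a \<in> carrier G" and b: "b \<in> N" by blast
  have "g \<otimes> h \<otimes> inv g = grp_comm G (g \<otimes> a \<otimes> inv g) (g \<otimes> b \<otimes> inv g)"
    using grp_comm_conj g a N.subset b h by blast
  moreover have "g \<otimes> b \<otimes> inv g \<in> N" using N.inv_op_closed2 g b by blast
  moreover have "g \<otimes> a \<otimes> inv g \<in> carrier G" using g a by simp
  ultimately show "g \<otimes> h \<otimes> inv g \<in> {grp_comm G a b | a b. a \<in> carrier G \<and> b \<in> N}"
    by blast
qed

lemma comm_subgroup_subset:
  assumes "N \<lhd> G" shows "comm_subgroup G (carrier G) N \<subseteq> N"
  unfolding comm_subgroup_def
proof (rule generate_subgroup_incl)
  interpret N: normal N G by (rule assms)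
  show "subgroup N G" by (rule N.subgroup_axioms)
  show "{grp_comm G a b | a b. a \<in> carrier G \<and> b \<in> N} \<subseteq> N"
  proof clarify
    fix a b assume "a \<in> carrier G" "b \<in> N"
    then have "inv a \<otimes> inv b \<otimes> a \<in> N"
      using N.inv_op_closed1 N.m_inv_closed by blast
    with \<open>b \<in> N\<close> show "grp_comm G a b \<in> N"
      unfolding grp_comm_def by (simp add: N.m_closed)
  qed
qed

lemma comm_subgroup_subset_isolator:
  assumes A: "A \<lhd> G" and tors: "A \<subseteq> isolator G (comm_subgroup G (carrier G) A)"
  shows "comm_subgroup G (carrier G) A
    \<subseteq> isolator G (comm_subgroup G (carrier G) (comm_subgroup G (carrier G) A))"
proof -
  define B where "B = comm_subgroup G (carrier G) A"
  define C where "C = comm_subgroup G (carrier G) B"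
  have B_normal: "B \<lhd> G" unfolding B_def by (rule comm_subgroup_normal[OF A])
  then have B_subgroup: "subgroup B G" by (rule normal_imp_subgroup)
  interpret C: normal C G unfolding C_def by (rule comm_subgroup_normal[OF B_normal])
  have central: "grp_comm G g b \<in> C" if "g \<in> carrier G" "b \<in> B" for g b
    using that unfolding C_def by (rule grp_comm_mem_comm_subgroup)
  have gens: "grp_comm G x a \<in> B \<inter> isolator G C" if x: "x \<in> carrier G" and a: "a \<in> A" for x a
  proof -
    have a_carrier: "a \<in> carrier G" by (rule subgroup.mem_carrier[OF normal_imp_subgroup[OF A] a])
    obtain m :: nat where m: "m > 0" "a [^] m \<in> B"
      using tors a unfolding B_def isolator_def by blast
    have xa: "grp_comm G x a \<in> B"
      using x a unfolding B_def by (rule grp_comm_mem_comm_subgroup)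
    have "grp_comm G x a [^] m \<in> C"
      by (rule C.grp_comm_nat_pow_mem[OF x a_carrier central[OF a_carrier xa] central[OF x m(2)]])
    with m(1) x a_carrier xa show ?thesis
      unfolding isolator_def by auto
  qed
  have "subgroup (B \<inter> isolator G C) G"
    by (rule C.isolator_Int_subgroup[OF B_subgroup central[OF subgroup.mem_carrier[OF B_subgroup]]])
  moreover have "{grp_comm G x a | x a. x \<in> carrier G \<and> a \<in> A} \<subseteq> B \<inter> isolator G C"
    using gens by blast
  ultimately have "B \<subseteq> B \<inter> isolator G C"
    unfolding B_def comm_subgroup_def by (rule generate_subgroup_incl[rotated])
  then show ?thesis unfolding B_def C_def by blast
qed

lemma lcs0_normal: "lcs0 G n \<lhd> G"
proof (induction n)
  case 0
  show ?case by (simp add: normal_inv_iff subgroup_self)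
next
  case (Suc n)
  then show ?case by (simp add: comm_subgroup_normal)
qed

lemma lower_central_normal: "lower_central G k \<lhd> G"
  by (simp add: lower_central_def lcs0_normal)

lemma lower_central_Suc:
  "1 \<le> k \<Longrightarrow> lower_central G (Suc k) = comm_subgroup G (carrier G) (lower_central G k)"
  by (cases k) (simp_all add: lower_central_def)

lemma lower_central_antimono: "i \<le> j \<Longrightarrow> lower_central G j \<subseteq> lower_central G i"
  unfolding lower_central_def
  by (rule lift_Suc_antimono_le[of "lcs0 G"]) (simp_all add: comm_subgroup_subset lcs0_normal)

lemma gen_comm_antimono: "i \<le> j \<Longrightarrow> gen_comm G j \<subseteq> gen_comm G i"
  unfolding gen_comm_eq_isolator by (intro isolator_mono lower_central_antimono)

lemma lower_central_subset_gen_comm_Suc_ge: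
  assumes "1 \<le> k" "k \<le> j" "lower_central G k \<subseteq> gen_comm G (Suc k)"
  shows "lower_central G j \<subseteq> gen_comm G (Suc j)"
  using assms(2,3)
proof (induction j rule: dec_induct)
  case base
  then show ?case .
next
  case (step j)
  with assms(1) show ?case
    using comm_subgroup_subset_isolator[OF lower_central_normal, of j]
    by (simp add: gen_comm_eq_isolator lower_central_Suc)
qed

lemma gen_comm_subset_gen_comm_ge:
  assumes "1 \<le> k" "k \<le> j" "lower_central G k \<subseteq> gen_comm G (Suc k)"
  shows "gen_comm G k \<subseteq> gen_comm G j"
  using assms(2)
proof (induction j rule: dec_induct)
  case base
  show ?case by simp
next
  case (step j)
  have "lower_central G j \<subseteq> gen_comm G (Suc j)"
    by (rule lower_central_subset_gen_comm_Suc_ge[OF assms(1) step.hyps(1) assms(3)])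
  then have "gen_comm G j \<subseteq> gen_comm G (Suc j)"
    unfolding gen_comm_eq_isolator by (rule isolator_subset_isolator)
  with step.IH show ?case by blast
qed


lemma lower_central_subset_gen_comm_Suc:
  assumes "finite (rcosets\<^bsub>G\<lparr>carrier := gen_comm G k\<rparr>\<^esub> (gen_comm G (Suc k)))"
  shows "lower_central G k \<subseteq> gen_comm G (Suc k)"
proof -
  have lower_central_subgroup: "subgroup (lower_central G i) G" for i
    by (rule normal_imp_subgroup[OF lower_central_normal])
  have "gen_comm G k \<subseteq> isolator G (lower_central G (Suc k))"
  proof (rule subset_isolator_if_finite_rcosets)
    show "gen_comm G k \<subseteq> carrier G" by (auto simp: gen_comm_def)
    show "h [^] i \<in> gen_comm G k" if "h \<in> gen_comm G k" for h and i :: nat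
      using that nat_pow_mem_isolator[OF lower_central_subgroup] by (simp add: gen_comm_eq_isolator)
  qed (use assms lower_central_subgroup in \<open>simp_all add: gen_comm_eq_isolator\<close>)
  then show ?thesis
    using subset_isolator[OF subgroup.subset[OF lower_central_subgroup]]
    by (auto simp: gen_comm_eq_isolator)
qed

end

theorem lemma5p7:
  fixes G :: "('a, 'b) monoid_scheme" and k :: nat
  assumes "group G" and "k \<ge> 1"
    and "finite (rcosets\<^bsub>G\<lparr>carrier := gen_comm G k\<rparr>\<^esub> (gen_comm G (Suc k)))"
  shows "(\<Inter>i\<in>{1..}. gen_comm G i) = gen_comm G k"
proof -
  interpret group G by (rule assms(1))
  have "gen_comm G k \<subseteq> gen_comm G i" for i
    using gen_comm_antimono
      gen_comm_subset_gen_comm_ge[OF assms(2) _ lower_central_subset_gen_comm_Suc[OF assms(3)]]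
    by (cases "i \<le> k") auto
  with assms(2) show ?thesis by auto
qed

end
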